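(* Let $m,n\in\mathbb{N}$, $\varepsilon\in\mathbb{R}$, and let $\bar g=-4\,du\,dv+\bar\rho^2\mathring\gamma_{\mathbb{S}^{n-1}}-\tau^2\mathring\gamma_{\mathbb{S}^{m-1}}$ with $\bar\rho=r+2\varepsilon f$. Then, wherever the coordinates are defined and $\bar\rho\ne0$, \[ \bar\square\Big(\frac{f}{\bar\rho}\Big)=-\frac{(n-3)f}{\bar\rho^3}+\frac{(n+m-2)\,r}{2\bar\rho^2}. \]
   Context: On $\mathbb{R}^{m+n}$ with Cartesian coordinates $t\in\mathbb{R}^m$, $x\in\mathbb{R}^n$: $r=|x|$, $\tau=|t|$, $u=\frac12(\tau-r)$, $v=\frac12(\tau+r)$, $f=-uv=\frac14(|x|^2-|t|^2)$. On $\{\tau\ne0,r\ne0\}$ one uses coordinates $(u,v,\omega_x,\omega_t)$ with $\omega_x=x/|x|\in\mathbb{S}^{n-1}$, $\omega_t=t/|t|\in\mathbb{S}^{m-1}$; $\mathring\gamma_{\mathbb{S}^k}$ is the unit round metric. $\bar\square=\bar g^{\alpha\beta}\bar\nabla_{\alpha\beta}$ is the wave operator of $\bar g$. *)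

theory Defs
  imports "HOL-Analysis.Analysis"
begin

text \<open>Points of R^(m+n) are vectors indexed by the finite type 'm + 'n:
  index Inl i is the t-coordinate t_i, index Inr j is the x-coordinate x_j.\<close>

definition tpart :: "real ^ ('m::finite + 'n::finite) \<Rightarrow> real ^ 'm" where
  "tpart p = (\<chi> i. p $ Inl i)"

definition xpart :: "real ^ ('m::finite + 'n::finite) \<Rightarrow> real ^ 'n" where
  "xpart p = (\<chi> j. p $ Inr j)"

definition cr :: "real ^ ('m::finite + 'n::finite) \<Rightarrow> real" where
  "cr p = norm (xpart p)"

definition ctau :: "real ^ ('m::finite + 'n::finite) \<Rightarrow> real" where
  "ctau p = norm (tpart p)"

definition cu :: "real ^ ('m::finite + 'n::finite) \<Rightarrow> real" where
  "cu p = (ctau p - cr p) / 2"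

definition cv :: "real ^ ('m::finite + 'n::finite) \<Rightarrow> real" where
  "cv p = (ctau p + cr p) / 2"

definition cf :: "real ^ ('m::finite + 'n::finite) \<Rightarrow> real" where
  "cf p = - (cu p * cv p)"

definition omx :: "real ^ ('m::finite + 'n::finite) \<Rightarrow> real ^ 'n" where
  "omx p = (1 / cr p) *\<^sub>R xpart p"

definition omt :: "real ^ ('m::finite + 'n::finite) \<Rightarrow> real ^ 'm" where
  "omt p = (1 / ctau p) *\<^sub>R tpart p"

definition crho :: "real \<Rightarrow> real ^ ('m::finite + 'n::finite) \<Rightarrow> real" where
  "crho \<epsilon> p = cr p + 2 * \<epsilon> * cf p"

definition dd :: "('a::real_normed_vector \<Rightarrow> real) \<Rightarrow> 'a \<Rightarrow> 'a \<Rightarrow> real" where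
  "dd F p X = deriv (\<lambda>s. F (p + s *\<^sub>R X)) 0"

definition dvec :: "('a::real_normed_vector \<Rightarrow> 'b::real_normed_vector) \<Rightarrow> 'a \<Rightarrow> 'a \<Rightarrow> 'b" where
  "dvec G p X = vector_derivative (\<lambda>s. G (p + s *\<^sub>R X)) (at 0)"

text \<open>The metric \<open>gbar = -4 du dv + rho_bar^2 \<gamma>_{S^{n-1}} - \<tau>^2 \<gamma>_{S^{m-1}}\<close>
  evaluated on tangent vectors X, Y at p; \<open>du dv\<close> is the symmetric product
  \<open>(du\<otimes>dv + dv\<otimes>du)/2\<close>, and the round metric of the unit sphere is the
  Euclidean inner product of the differentials of \<open>\<omega>_x = x/|x|\<close>, \<open>\<omega>_t = t/|t|\<close>.\<close>
definition gbar :: "real \<Rightarrow> real ^ ('m::finite + 'n::finite) \<Rightarrow>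
    real ^ ('m + 'n) \<Rightarrow> real ^ ('m + 'n) \<Rightarrow> real" where
  "gbar \<epsilon> p X Y =
     - 2 * (dd cu p X * dd cv p Y + dd cu p Y * dd cv p X)
     + (crho \<epsilon> p)\<^sup>2 * (dvec omx p X \<bullet> dvec omx p Y)
     - (ctau p)\<^sup>2 * (dvec omt p X \<bullet> dvec omt p Y)"

definition gmat :: "real \<Rightarrow> real ^ ('m::finite + 'n::finite) \<Rightarrow> real ^ ('m + 'n) ^ ('m + 'n)" where
  "gmat \<epsilon> p = (\<chi> a b. gbar \<epsilon> p (axis a 1) (axis b 1))"

definition pd :: "'i \<Rightarrow> (real ^ 'i::finite \<Rightarrow> real) \<Rightarrow> real ^ 'i \<Rightarrow> real" where
  "pd a F p = dd F p (axis a 1)"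

definition ginv :: "(real ^ 'i::finite \<Rightarrow> real ^ 'i ^ 'i) \<Rightarrow> real ^ 'i \<Rightarrow> real ^ 'i ^ 'i" where
  "ginv G p = matrix_inv (G p)"

definition christ :: "(real ^ 'i::finite \<Rightarrow> real ^ 'i ^ 'i) \<Rightarrow> real ^ 'i \<Rightarrow> 'i \<Rightarrow> 'i \<Rightarrow> 'i \<Rightarrow> real" where
  "christ G p c a b = (1/2) * (\<Sum>d\<in>UNIV. ginv G p $ c $ d *
      (pd a (\<lambda>q. G q $ d $ b) p + pd b (\<lambda>q. G q $ d $ a) p - pd d (\<lambda>q. G q $ a $ b) p))"

definition wave :: "(real ^ 'i::finite \<Rightarrow> real ^ 'i ^ 'i) \<Rightarrow> (real ^ 'i \<Rightarrow> real) \<Rightarrow> real ^ 'i \<Rightarrow> real" where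
  "wave G \<phi> p = (\<Sum>a\<in>UNIV. \<Sum>b\<in>UNIV. ginv G p $ a $ b *
      (pd a (pd b \<phi>) p - (\<Sum>c\<in>UNIV. christ G p c a b * pd c \<phi> p)))"

end

theory Submission
  imports Defs
begin

text \<open>
  In Cartesian coordinates \<open>gbar = -|dt|\<^sup>2 + dr\<^sup>2 + \<rho>\<^sup>2 \<gamma>\<close>, so its component matrix
  is \<open>-\<delta>\<close> on the t-block and \<open>k \<delta> + (1 - k) x x\<^sup>T / r\<^sup>2\<close> with \<open>k = (\<rho>/r)\<^sup>2\<close> on
  the x-block; the inverse has the same shape with \<open>1/k\<close> in place of \<open>k\<close>. All functions
  involved depend on the point only through r and \<tau>, so their gradients are combinations of
  \<open>x\<cdot>dx\<close> and \<open>t\<cdot>dt\<close>, and every index contraction in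
  \<open>g\<^sup>a\<^sup>b (\<partial>\<^sub>a\<partial>\<^sub>b\<phi> - \<Gamma>\<^sup>c\<^sub>a\<^sub>b \<partial>\<^sub>c\<phi>)\<close> reduces to a few identities for matrices
  \<open>a \<delta> + b x x\<^sup>T\<close>. What remains is a rational identity in r, \<tau>, \<rho>, \<epsilon>, which holds
  because \<open>\<rho> = r + \<epsilon> (r\<^sup>2 - \<tau>\<^sup>2) / 2\<close>.
\<close>

lemma sum_UNIV_Plus:
  "(\<Sum>a\<in>(UNIV::('a::finite + 'b::finite) set). g a) = (\<Sum>i\<in>UNIV. g (Inl i)) + (\<Sum>j\<in>UNIV. g (Inr j))"
  using sum.Plus[of "UNIV::'a set" "UNIV::'b set" g] by (simp add: o_def)

lemma matrix_inv_eqI: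
  fixes A B :: "real ^ 'n ^ 'n"
  assumes "A ** B = mat 1"
  shows "matrix_inv A = B"
proof -
  have BA: "B ** A = mat 1" using assms matrix_left_right_inverse by blast
  show ?thesis unfolding matrix_inv_def
  proof (rule some_equality)
    fix C assume C: "A ** C = mat 1 \<and> C ** A = mat 1"
    have "C = C ** (A ** B)" by (simp add: assms matrix_mul_rid)
    also have "\<dots> = B" using C by (simp add: matrix_mul_assoc matrix_mul_lid)
    finally show "C = B" .
  qed (use assms BA in simp)
qed

lemma has_derivative_along_line:
  assumes "(F has_derivative F') (at q)"
  shows "((\<lambda>s. F (q + s *\<^sub>R X)) has_derivative (\<lambda>s. s *\<^sub>R F' X)) (at 0)"
proof -
  have "((\<lambda>s::real. q + s *\<^sub>R X) has_derivative (\<lambda>s. s *\<^sub>R X)) (at 0)"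
    by (auto intro!: derivative_eq_intros)
  from has_derivative_compose[OF this, of F F'] assms
  show ?thesis by (simp add: linear_scale has_derivative_linear)
qed

lemma dd_eq_derivative:
  assumes "(F has_derivative F') (at q)"
  shows "dd F q X = F' X"
  using has_derivative_along_line[OF assms, of X]
  unfolding dd_def by (intro DERIV_imp_deriv) (simp add: has_field_derivative_def mult.commute[of _ "F' X"])

lemma dvec_eq_derivative:
  assumes "(F has_derivative F') (at q)"
  shows "dvec F q X = F' X"
  using has_derivative_along_line[OF assms, of X]
  by (simp add: dvec_def has_vector_derivative_def vector_derivative_at)

lemma dd_cong_open:
  assumes "open S" "q \<in> S" "\<And>y. y \<in> S \<Longrightarrow> F y = G y"
  shows "dd F q X = dd G q X"
proof -
  have "open ((\<lambda>s::real. q + s *\<^sub>R X) -` S)"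
    using assms(1) by (intro open_vimage continuous_intros)
  then have "\<forall>\<^sub>F s in nhds 0. q + s *\<^sub>R X \<in> S"
    using eventually_nhds_in_open[of _ 0] assms(2) by fastforce
  then show ?thesis
    unfolding dd_def by (auto intro!: deriv_cong_ev elim!: eventually_mono simp: assms(3))
qed

lemma bounded_linear_xpart: "bounded_linear (xpart :: real ^ ('m::finite + 'n::finite) \<Rightarrow> real ^ 'n)"
  unfolding linear_conv_bounded_linear[symmetric]
  by (rule linearI) (simp_all add: xpart_def vec_eq_iff)

lemma bounded_linear_tpart: "bounded_linear (tpart :: real ^ ('m::finite + 'n::finite) \<Rightarrow> real ^ 'm)"
  unfolding linear_conv_bounded_linear[symmetric]
  by (rule linearI) (simp_all add: tpart_def vec_eq_iff)

lemma has_derivative_xpart: "(xpart has_derivative xpart) F"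
  by (rule bounded_linear_imp_has_derivative[OF bounded_linear_xpart])

lemma has_derivative_tpart: "(tpart has_derivative tpart) F"
  by (rule bounded_linear_imp_has_derivative[OF bounded_linear_tpart])

lemma xpart_nth [simp]: "xpart q $ j = q $ Inr j"
  by (simp add: xpart_def)

lemma tpart_nth [simp]: "tpart q $ i = q $ Inl i"
  by (simp add: tpart_def)

lemma xpart_axis [simp]:
  "xpart (axis (Inr j) c :: real ^ ('m::finite + 'n::finite)) = axis j c"
  "xpart (axis (Inl i) c :: real ^ ('m::finite + 'n::finite)) = 0"
  by (simp_all add: xpart_def axis_def vec_eq_iff)

lemma tpart_axis [simp]:
  "tpart (axis (Inl i) c :: real ^ ('m::finite + 'n::finite)) = axis i c"
  "tpart (axis (Inr j) c :: real ^ ('m::finite + 'n::finite)) = 0"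
  by (simp_all add: tpart_def axis_def vec_eq_iff)

lemma cf_eq: "cf q = ((cr q)\<^sup>2 - (ctau q)\<^sup>2) / 4"
  by (simp add: cf_def cu_def cv_def field_simps power2_eq_square)

lemma crho_eq: "crho \<epsilon> q = cr q + \<epsilon> * ((cr q)\<^sup>2 - (ctau q)\<^sup>2) / 2"
  by (simp add: crho_def cf_eq)

lemma has_derivative_cr:
  assumes "cr q \<noteq> 0"
  shows "(cr has_derivative (\<lambda>h. (xpart q \<bullet> xpart h) / cr q)) (at q within S)"
proof -
  have "xpart q \<noteq> 0" using assms by (simp add: cr_def)
  from has_derivative_compose[OF has_derivative_xpart has_derivative_norm[OF this]]
  show ?thesis
    by (simp add: cr_def[abs_def] sgn_div_norm inner_commute divide_inverse mult.commute)
qed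

lemma has_derivative_ctau:
  assumes "ctau q \<noteq> 0"
  shows "(ctau has_derivative (\<lambda>h. (tpart q \<bullet> tpart h) / ctau q)) (at q within S)"
proof -
  have "tpart q \<noteq> 0" using assms by (simp add: ctau_def)
  from has_derivative_compose[OF has_derivative_tpart has_derivative_norm[OF this]]
  show ?thesis
    by (simp add: ctau_def[abs_def] sgn_div_norm inner_commute divide_inverse mult.commute)
qed

lemma has_derivative_crho:
  assumes "cr q \<noteq> 0" "ctau q \<noteq> 0"
  shows "(crho \<epsilon> has_derivative
     (\<lambda>h. (1 / cr q + \<epsilon>) * (xpart q \<bullet> xpart h) - \<epsilon> * (tpart q \<bullet> tpart h))) (at q within S)"
proof -
  have e: "crho \<epsilon> = (\<lambda>q. cr q + \<epsilon> * ((cr q)\<^sup>2 - (ctau q)\<^sup>2) / 2)"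
    by (simp add: crho_eq fun_eq_iff)
  show ?thesis unfolding e
    by (rule has_derivative_eq_rhs,
        (rule derivative_intros has_derivative_cr[OF assms(1)] has_derivative_ctau[OF assms(2)])+)
      (use assms in \<open>auto simp: field_simps power2_eq_square\<close>)
qed

lemma has_derivative_cu:
  assumes "cr q \<noteq> 0" "ctau q \<noteq> 0"
  shows "(cu has_derivative (\<lambda>h. ((tpart q \<bullet> tpart h) / ctau q - (xpart q \<bullet> xpart h) / cr q) / 2)) (at q)"
proof -
  have e: "cu = (\<lambda>q. (ctau q - cr q) / 2)" by (simp add: cu_def fun_eq_iff)
  show ?thesis unfolding e
    by (rule has_derivative_eq_rhs,
        (rule derivative_intros has_derivative_cr[OF assms(1)] has_derivative_ctau[OF assms(2)])+)
      (use assms in auto)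
qed

lemma has_derivative_cv:
  assumes "cr q \<noteq> 0" "ctau q \<noteq> 0"
  shows "(cv has_derivative (\<lambda>h. ((tpart q \<bullet> tpart h) / ctau q + (xpart q \<bullet> xpart h) / cr q) / 2)) (at q)"
proof -
  have e: "cv = (\<lambda>q. (ctau q + cr q) / 2)" by (simp add: cv_def fun_eq_iff)
  show ?thesis unfolding e
    by (rule has_derivative_eq_rhs,
        (rule derivative_intros has_derivative_cr[OF assms(1)] has_derivative_ctau[OF assms(2)])+)
      (use assms in auto)
qed

lemma has_derivative_omx:
  assumes "cr q \<noteq> 0"
  shows "(omx has_derivative
     (\<lambda>h. (1 / cr q) *\<^sub>R xpart h - ((xpart q \<bullet> xpart h) / (cr q)^3) *\<^sub>R xpart q)) (at q)"
proof -
  have e: "omx = (\<lambda>q. (1 / cr q) *\<^sub>R xpart q)" by (simp add: omx_def fun_eq_iff)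
  show ?thesis unfolding e
    by (rule has_derivative_eq_rhs,
        (rule derivative_intros has_derivative_cr[OF assms] has_derivative_xpart)+)
      (use assms in \<open>auto intro: has_derivative_xpart simp: power3_eq_cube divide_inverse mult_ac\<close>)
qed

lemma has_derivative_omt:
  assumes "ctau q \<noteq> 0"
  shows "(omt has_derivative
     (\<lambda>h. (1 / ctau q) *\<^sub>R tpart h - ((tpart q \<bullet> tpart h) / (ctau q)^3) *\<^sub>R tpart q)) (at q)"
proof -
  have e: "omt = (\<lambda>q. (1 / ctau q) *\<^sub>R tpart q)" by (simp add: omt_def fun_eq_iff)
  show ?thesis unfolding e
    by (rule has_derivative_eq_rhs,
        (rule derivative_intros has_derivative_ctau[OF assms] has_derivative_tpart)+)
      (use assms in \<open>auto intro: has_derivative_tpart simp: power3_eq_cube divide_inverse mult_ac\<close>)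
qed

subsection \<open>Matrices of the form \<open>a \<delta> + b y y\<^sup>T\<close>\<close>

definition kdelta :: "'a \<Rightarrow> 'a \<Rightarrow> real" where
  "kdelta i j = (if i = j then 1 else 0)"

lemma kdelta_commute: "kdelta i j = kdelta j i"
  by (simp add: kdelta_def)

lemma kdelta_same [simp]: "kdelta i i = 1"
  by (simp add: kdelta_def)

lemma kdelta_Plus [simp]:
  "kdelta (Inl i) (Inl i') = kdelta i i'" "kdelta (Inr j) (Inr l) = kdelta j l"
  "kdelta (Inl i) (Inr l) = 0" "kdelta (Inr j) (Inl i') = 0"
  by (simp_all add: kdelta_def)

lemma sum_kdelta_mult [simp]:
  "(\<Sum>l\<in>(UNIV::'a::finite set). kdelta j l * f l) = f j"
  "(\<Sum>l\<in>(UNIV::'a::finite set). kdelta l j * f l) = f j"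
  by (simp_all add: kdelta_def if_distrib[of "\<lambda>x. x * _"] cong: if_cong)

definition sumsq :: "('n::finite \<Rightarrow> real) \<Rightarrow> real" where
  "sumsq y = (\<Sum>j\<in>UNIV. y j * y j)"

definition radial :: "real \<Rightarrow> real \<Rightarrow> ('n \<Rightarrow> real) \<Rightarrow> 'n \<Rightarrow> 'n \<Rightarrow> real" where
  "radial a b y j l = a * kdelta j l + b * (y j * y l)"

lemma radial_commute: "radial a b y j l = radial a b y l j"
  by (simp add: radial_def kdelta_commute mult.commute)

lemma sum_radial_mult:
  fixes y :: "'n::finite \<Rightarrow> real"
  shows "(\<Sum>l\<in>UNIV. radial a b y j l * F l) = a * F j + b * y j * (\<Sum>l\<in>UNIV. y l * F l)"
proof -
  have "radial a b y j l * F l = a * (kdelta j l * F l) + (b * y j) * (y l * F l)" for l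
    by (simp add: radial_def algebra_simps)
  then show ?thesis
    by (simp only: sum.distrib sum_kdelta_mult flip: sum_distrib_left)
qed

lemma sum_radial_mult_left:
  fixes y :: "'n::finite \<Rightarrow> real"
  shows "(\<Sum>l\<in>UNIV. radial a b y l j * F l) = a * F j + b * y j * (\<Sum>l\<in>UNIV. y l * F l)"
  by (simp only: radial_commute[of a b y _ j] sum_radial_mult)

lemma sum_radial_mult_y:
  fixes y :: "'n::finite \<Rightarrow> real"
  shows "(\<Sum>l\<in>UNIV. radial a b y j l * y l) = (a + b * sumsq y) * y j"
  unfolding sum_radial_mult sumsq_def by (simp add: algebra_simps)

lemma sum_radial_diag:
  fixes y :: "'n::finite \<Rightarrow> real"
  shows "(\<Sum>j\<in>UNIV. radial a b y j j) = real CARD('n) * a + b * sumsq y"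
  by (simp add: radial_def sumsq_def sum.distrib flip: sum_distrib_left)

lemma radial_mult_radial:
  fixes y :: "'n::finite \<Rightarrow> real"
  shows "(\<Sum>l\<in>UNIV. radial a b y j l * radial c d y l s)
    = radial (a * c) (a * d + b * c + b * d * sumsq y) y j s"
proof -
  have "(\<Sum>l\<in>UNIV. y l * radial c d y l s) = (c + d * sumsq y) * y s"
    using sum_radial_mult_y[of c d y s] by (simp add: radial_commute[of c d y _ s] mult.commute)
  then show ?thesis
    by (simp add: sum_radial_mult) (simp add: radial_def algebra_simps)
qed

lemma radial_frobenius:
  fixes y :: "'n::finite \<Rightarrow> real"
  shows "(\<Sum>j\<in>UNIV. \<Sum>l\<in>UNIV. radial a b y j l * radial c d y j l)
     = real CARD('n) * a * c + (a * d + b * c) * sumsq y + b * d * (sumsq y)\<^sup>2"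
proof -
  have "(\<Sum>l\<in>UNIV. radial a b y j l * radial c d y j l)
      = radial (a * c) (a * d + b * c + b * d * sumsq y) y j j" for j
    using radial_mult_radial[of a b y j c d j] by (simp only: radial_commute[of c d y j])
  then show ?thesis
    by (simp add: sum_radial_diag algebra_simps power2_eq_square)
qed

text \<open>\<open>radial_grad c d e y s j l\<close> is \<open>\<partial>\<^sub>s (k \<delta>\<^sub>j\<^sub>l + h y\<^sub>j y\<^sub>l)\<close> at a point where
  \<open>\<partial>\<^sub>s k = c y\<^sub>s\<close>, \<open>\<partial>\<^sub>s h = d y\<^sub>s\<close> and \<open>h = e\<close>.\<close>

definition radial_grad :: "real \<Rightarrow> real \<Rightarrow> real \<Rightarrow> ('n \<Rightarrow> real) \<Rightarrow> 'n \<Rightarrow> 'n \<Rightarrow> 'n \<Rightarrow> real" where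
  "radial_grad c d e y s j l = y s * radial c d y j l + e * (kdelta s j * y l + kdelta s l * y j)"

lemma radial_contract_grad_last:
  fixes y :: "'n::finite \<Rightarrow> real"
  shows "(\<Sum>j\<in>UNIV. \<Sum>l\<in>UNIV. radial a b y j l * radial_grad c d e y s j l)
     = (real CARD('n) * a * c + (a * d + b * c) * sumsq y + b * d * (sumsq y)\<^sup>2
        + 2 * e * (a + b * sumsq y)) * y s"
proof -
  have "radial a b y j l * radial_grad c d e y s j l
      = y s * (radial a b y j l * radial c d y j l) + e * (kdelta s j * (radial a b y j l * y l))
        + e * (kdelta s l * (radial a b y j l * y j))" for j l
    by (simp add: radial_grad_def algebra_simps)
  then have "(\<Sum>j\<in>UNIV. \<Sum>l\<in>UNIV. radial a b y j l * radial_grad c d e y s j l)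
      = y s * (\<Sum>j\<in>UNIV. \<Sum>l\<in>UNIV. radial a b y j l * radial c d y j l)
        + e * (\<Sum>j\<in>UNIV. kdelta s j * (\<Sum>l\<in>UNIV. radial a b y j l * y l))
        + e * (\<Sum>j\<in>UNIV. \<Sum>l\<in>UNIV. kdelta s l * (radial a b y j l * y j))"
    by (simp only: sum.distrib sum_distrib_left)
  also have "\<dots> = y s * (\<Sum>j\<in>UNIV. \<Sum>l\<in>UNIV. radial a b y j l * radial c d y j l)
        + 2 * e * (a + b * sumsq y) * y s"
    using sum_radial_mult_y[of a b y s] by (simp add: radial_commute[of a b y _ s])
  finally show ?thesis
    by (simp add: radial_frobenius algebra_simps)
qed

lemma radial_contract_grad_first:
  fixes y :: "'n::finite \<Rightarrow> real"
  shows "(\<Sum>s\<in>UNIV. \<Sum>j\<in>UNIV. radial a b y s j * radial_grad c d e y s l j)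
     = ((a + b * sumsq y) * (c + d * sumsq y) + e * (a + b * sumsq y)
        + e * (real CARD('n) * a + b * sumsq y)) * y l"
proof -
  have "radial a b y s j * radial_grad c d e y s l j
      = (radial a b y j s * y s) * radial c d y l j + e * (kdelta s l * (radial a b y s j * y j))
        + e * (kdelta s j * (radial a b y s j * y l))" for s j
    by (simp add: radial_grad_def radial_commute[of a b y s] algebra_simps)
  then have "(\<Sum>s\<in>UNIV. \<Sum>j\<in>UNIV. radial a b y s j * radial_grad c d e y s l j)
      = (\<Sum>s\<in>UNIV. \<Sum>j\<in>UNIV. (radial a b y j s * y s) * radial c d y l j)
        + e * (\<Sum>s\<in>UNIV. kdelta s l * (\<Sum>j\<in>UNIV. radial a b y s j * y j))
        + e * (\<Sum>s\<in>UNIV. \<Sum>j\<in>UNIV. kdelta s j * (radial a b y s j * y l))"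
    by (simp only: sum.distrib sum_distrib_left)
  also have "(\<Sum>s\<in>UNIV. \<Sum>j\<in>UNIV. (radial a b y j s * y s) * radial c d y l j)
      = (\<Sum>j\<in>UNIV. (\<Sum>s\<in>UNIV. radial a b y j s * y s) * radial c d y l j)"
    by (subst sum.swap) (simp only: sum_distrib_right)
  also have "\<dots> = (\<Sum>j\<in>UNIV. (a + b * sumsq y) * (radial c d y l j * y j))"
    by (simp only: sum_radial_mult_y) (simp only: mult_ac)
  also have "\<dots> = (a + b * sumsq y) * (c + d * sumsq y) * y l"
    by (simp only: sum_radial_mult_y mult.assoc flip: sum_distrib_left)
  also have "e * (\<Sum>s\<in>UNIV. kdelta s l * (\<Sum>j\<in>UNIV. radial a b y s j * y j))
      = e * (a + b * sumsq y) * y l"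
    by (simp add: sum_radial_mult_y)
  also have "e * (\<Sum>s\<in>UNIV. \<Sum>j\<in>UNIV. kdelta s j * (radial a b y s j * y l))
      = e * (real CARD('n) * a + b * sumsq y) * y l"
    by (simp only: sum_kdelta_mult sum_radial_diag mult.assoc flip: sum_distrib_right)
  finally show ?thesis
    by (simp add: algebra_simps)
qed

subsection \<open>The metric and its inverse\<close>

text \<open>Cartesian components of \<open>-|dt|\<^sup>2 + dr\<^sup>2 + c r\<^sup>2 \<gamma>\<close>, with \<open>\<gamma>\<close> the round metric
  in the direction of x: the x-block is the identity on x and c on its orthogonal complement.\<close>

definition warped :: "real \<Rightarrow> real ^ ('m::finite + 'n::finite) \<Rightarrow> ('m + 'n) \<Rightarrow> ('m + 'n) \<Rightarrow> real" where
  "warped c q a b = (case (a, b) of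
      (Inl i, Inl i') \<Rightarrow> - kdelta i i'
    | (Inr j, Inr l) \<Rightarrow> radial c ((1 - c) / (cr q)\<^sup>2) (\<lambda>j. q $ Inr j) j l
    | _ \<Rightarrow> 0)"

definition warp :: "real \<Rightarrow> real ^ ('m::finite + 'n::finite) \<Rightarrow> real" where
  "warp \<epsilon> q = (crho \<epsilon> q / cr q)\<^sup>2"

lemma warped_commute: "warped c q a b = warped c q b a"
  by (auto simp: warped_def kdelta_commute radial_commute split: sum.split)

lemma sumsq_xcoord: "sumsq (\<lambda>j. q $ Inr j) = (cr q)\<^sup>2"
  by (simp add: sumsq_def cr_def power2_norm_eq_inner inner_vec_def)

lemma sumsq_tcoord: "sumsq (\<lambda>i. q $ Inl i) = (ctau q)\<^sup>2"
  by (simp add: sumsq_def ctau_def power2_norm_eq_inner inner_vec_def)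

lemma gmat_eq_warped:
  assumes r: "cr q \<noteq> 0" and t: "ctau q \<noteq> 0"
  shows "gmat \<epsilon> q $ a $ b = warped (warp \<epsilon> q) q a b"
proof -
  note derivs = dd_eq_derivative[OF has_derivative_cu[OF r t]] dd_eq_derivative[OF has_derivative_cv[OF r t]]
    dvec_eq_derivative[OF has_derivative_omx[OF r]] dvec_eq_derivative[OF has_derivative_omt[OF t]]
  have squares: "xpart q \<bullet> xpart q = (cr q)\<^sup>2" "tpart q \<bullet> tpart q = (ctau q)\<^sup>2"
    by (simp_all add: cr_def ctau_def power2_norm_eq_inner)
  show ?thesis
    unfolding gmat_def gbar_def warped_def warp_def radial_def kdelta_def
    apply (simp only: derivs vec_lambda_beta)
    apply (cases a; cases b)
       apply (simp_all add: inner_diff_left inner_diff_right inner_axis inner_axis' inner_axis_axis squares)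
    using r t by (auto simp: axis_def field_simps power2_eq_square power3_eq_cube)
qed

lemma warped_mult_warped:
  fixes q :: "real ^ ('m::finite + 'n::finite)"
  assumes "cr q \<noteq> 0" and "c * c' = 1"
  shows "(\<chi> a b. warped c q a b) ** (\<chi> a b. warped c' q a b) = mat 1"
proof -
  have "(\<Sum>d\<in>UNIV. warped c q a d * warped c' q d b) = kdelta a b" for a b
  proof (cases a; cases b)
    fix j s assume ab: "a = Inr j" "b = Inr s"
    have "(\<Sum>l\<in>UNIV. radial c ((1 - c) / (cr q)\<^sup>2) (\<lambda>j. q $ Inr j) j l
                     * radial c' ((1 - c') / (cr q)\<^sup>2) (\<lambda>j. q $ Inr j) l s) = kdelta j s"
    proof -
      have "c * ((1 - c') / (cr q)\<^sup>2) + (1 - c) / (cr q)\<^sup>2 * c'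
          + (1 - c) / (cr q)\<^sup>2 * ((1 - c') / (cr q)\<^sup>2) * (cr q)\<^sup>2 = 0"
        using assms by (simp add: field_simps power2_eq_square)
      then show ?thesis
        using assms by (simp only: radial_mult_radial sumsq_xcoord) (simp add: radial_def)
    qed
    then show ?thesis
      by (simp add: ab warped_def sum_UNIV_Plus)
  qed (simp_all add: warped_def sum_UNIV_Plus)
  then show ?thesis
    by (simp add: matrix_matrix_mult_def mat_def vec_eq_iff kdelta_def)
qed

lemma ginv_gmat:
  assumes "cr p \<noteq> 0" "ctau p \<noteq> 0" "crho \<epsilon> p \<noteq> 0"
  shows "ginv (gmat \<epsilon>) p $ a $ b = warped (inverse (warp \<epsilon> p)) p a b"
proof -
  have "gmat \<epsilon> p = (\<chi> a b. warped (warp \<epsilon> p) p a b)"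
    using gmat_eq_warped[OF assms(1,2)] by (simp add: vec_eq_iff)
  moreover have "(\<chi> a b. warped (warp \<epsilon> p) p a b) ** (\<chi> a b. warped (inverse (warp \<epsilon> p)) p a b) = mat 1"
    by (rule warped_mult_warped) (use assms in \<open>simp_all add: warp_def\<close>)
  ultimately show ?thesis
    by (simp add: ginv_def matrix_inv_eqI)
qed

definition coord_domain :: "real \<Rightarrow> (real ^ ('m::finite + 'n::finite)) set" where
  "coord_domain \<epsilon> = {q. cr q \<noteq> 0 \<and> ctau q \<noteq> 0 \<and> crho \<epsilon> q \<noteq> 0}"

lemma open_coord_domain: "open (coord_domain \<epsilon>)"
proof -
  have cont: "continuous_on UNIV cr" "continuous_on UNIV ctau"
    unfolding cr_def[abs_def] ctau_def[abs_def]
    by (intro continuous_intros linear_continuous_on bounded_linear_xpart bounded_linear_tpart)+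
  then have "continuous_on UNIV (crho \<epsilon>)"
    unfolding crho_eq[abs_def] by (intro continuous_intros) auto
  with cont show ?thesis
    unfolding coord_domain_def Collect_conj_eq
    by (intro open_Int open_Collect_neq continuous_on_const)
qed

lemma has_derivative_nth: "((\<lambda>q. q $ a) has_derivative (\<lambda>h. h $ a)) F"
  by (rule bounded_linear_imp_has_derivative[OF bounded_linear_vec_nth])

lemma pd_const: "pd a (\<lambda>q. c) p = 0"
  by (simp add: pd_def dd_eq_derivative[OF has_derivative_const])

lemma pd_from_has_derivative:
  "(F has_derivative (\<lambda>h. Fx * (xpart p \<bullet> xpart h) + Ft * (tpart p \<bullet> tpart h))) (at p) \<Longrightarrow>
    pd a F p = (case a of Inl i \<Rightarrow> Ft * p $ Inl i | Inr j \<Rightarrow> Fx * p $ Inr j)"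
  by (cases a) (simp_all add: pd_def dd_eq_derivative inner_axis)

lemma axis_nth_kdelta: "axis a (1::real) $ b = kdelta a b"
  by (simp add: axis_def kdelta_def)

text \<open>\<open>warped_deriv cx ct c p a d b\<close> is \<open>\<partial>\<^sub>a\<close> of the \<open>(d, b)\<close> entry of \<open>warped c\<close> when
  \<open>dc = cx x\<cdot>dx + ct t\<cdot>dt\<close>; only the x-block varies.\<close>

definition warped_deriv :: "real \<Rightarrow> real \<Rightarrow> real \<Rightarrow> real ^ ('m::finite + 'n::finite) \<Rightarrow>
    ('m + 'n) \<Rightarrow> ('m + 'n) \<Rightarrow> ('m + 'n) \<Rightarrow> real" where
  "warped_deriv cx ct c p a d b = (case (d, b) of
      (Inr j, Inr l) \<Rightarrow> (case a of
          Inl i \<Rightarrow> p $ Inl i * radial ct (- ct / (cr p)\<^sup>2) (\<lambda>j. p $ Inr j) j l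
        | Inr s \<Rightarrow> radial_grad cx (- cx / (cr p)\<^sup>2 - 2 * (1 - c) / (cr p)^4) ((1 - c) / (cr p)\<^sup>2)
                    (\<lambda>j. p $ Inr j) s j l)
    | _ \<Rightarrow> 0)"

lemma pd_warped:
  assumes r: "cr p \<noteq> 0"
    and c: "(c has_derivative (\<lambda>h. cx * (xpart p \<bullet> xpart h) + ct * (tpart p \<bullet> tpart h))) (at p)"
  shows "pd a (\<lambda>q. warped (c q) q d b) p = warped_deriv cx ct (c p) p a d b"
proof (cases "\<exists>j l. d = Inr j \<and> b = Inr l")
  case True
  then obtain j l where db: "d = Inr j" "b = Inr l" by blast
  have e: "(\<lambda>q. warped (c q) q d b)
      = (\<lambda>q. c q * kdelta j l + (1 - c q) / (cr q)\<^sup>2 * (q $ Inr j * q $ Inr l))"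
    by (simp add: db warped_def radial_def)
  show ?thesis
    unfolding pd_def e
    apply (rule trans[OF dd_eq_derivative])
    apply (rule derivative_eq_intros c has_derivative_cr[OF r] has_derivative_nth refl | simp add: r)+
    apply (cases a)
    using r by (simp_all add: db warped_deriv_def radial_def radial_grad_def axis_nth_kdelta inner_axis
        field_simps power2_eq_square power3_eq_cube power4_eq_xxxx)
next
  case False
  then have "(\<lambda>q. warped (c q) q d b) = (\<lambda>q. warped 0 0 d b)"
    by (auto simp: warped_def split: sum.split)
  with False show ?thesis
    by (auto simp: pd_const warped_deriv_def split: sum.split)
qed

definition warp_dx :: "real \<Rightarrow> real ^ ('m::finite + 'n::finite) \<Rightarrow> real" where
  "warp_dx \<epsilon> q = 2 * crho \<epsilon> q * (1 + \<epsilon> * cr q - crho \<epsilon> q / cr q) / (cr q)^3"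

definition warp_dt :: "real \<Rightarrow> real ^ ('m::finite + 'n::finite) \<Rightarrow> real" where
  "warp_dt \<epsilon> q = - 2 * \<epsilon> * crho \<epsilon> q / (cr q)\<^sup>2"

lemma has_derivative_warp:
  assumes r: "cr q \<noteq> 0" and t: "ctau q \<noteq> 0"
  shows "(warp \<epsilon> has_derivative
     (\<lambda>h. warp_dx \<epsilon> q * (xpart q \<bullet> xpart h) + warp_dt \<epsilon> q * (tpart q \<bullet> tpart h))) (at q)"
proof -
  have e: "warp \<epsilon> = (\<lambda>q. (crho \<epsilon> q / cr q)\<^sup>2)" by (simp add: warp_def fun_eq_iff)
  show ?thesis unfolding e
    by (rule has_derivative_eq_rhs,
        (rule derivative_intros has_derivative_cr[OF r] has_derivative_crho[OF r t] | simp add: r)+)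
      (use r in \<open>simp add: warp_dx_def warp_dt_def fun_eq_iff field_simps power2_eq_square power3_eq_cube\<close>)
qed

lemma pd_gmat:
  assumes p: "p \<in> coord_domain \<epsilon>"
  shows "pd a (\<lambda>q. gmat \<epsilon> q $ d $ b) p = warped_deriv (warp_dx \<epsilon> p) (warp_dt \<epsilon> p) (warp \<epsilon> p) p a d b"
proof -
  have "pd a (\<lambda>q. gmat \<epsilon> q $ d $ b) p = pd a (\<lambda>q. warped (warp \<epsilon> q) q d b) p"
    unfolding pd_def using open_coord_domain p
    by (rule dd_cong_open) (simp add: coord_domain_def gmat_eq_warped)
  also have "\<dots> = warped_deriv (warp_dx \<epsilon> p) (warp_dt \<epsilon> p) (warp \<epsilon> p) p a d b"
    using p by (intro pd_warped has_derivative_warp) (simp_all add: coord_domain_def)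
  finally show ?thesis .
qed

definition phi_dx :: "real \<Rightarrow> real ^ ('m::finite + 'n::finite) \<Rightarrow> real" where
  "phi_dx \<epsilon> q = ((cr q)\<^sup>2 + (ctau q)\<^sup>2) / (4 * cr q * (crho \<epsilon> q)\<^sup>2)"

definition phi_dt :: "real \<Rightarrow> real ^ ('m::finite + 'n::finite) \<Rightarrow> real" where
  "phi_dt \<epsilon> q = - cr q / (2 * (crho \<epsilon> q)\<^sup>2)"

definition phi_dxdx :: "real \<Rightarrow> real ^ ('m::finite + 'n::finite) \<Rightarrow> real" where
  "phi_dxdx \<epsilon> q = (8 * cr q * (crho \<epsilon> q)\<^sup>2 - ((cr q)\<^sup>2 + (ctau q)\<^sup>2) * (4 * (crho \<epsilon> q)\<^sup>2 / cr q
     + 8 * crho \<epsilon> q * (1 + \<epsilon> * cr q))) / (16 * (cr q)\<^sup>2 * (crho \<epsilon> q)^4)"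

definition phi_dtdt :: "real \<Rightarrow> real ^ ('m::finite + 'n::finite) \<Rightarrow> real" where
  "phi_dtdt \<epsilon> q = - \<epsilon> * cr q / (crho \<epsilon> q)^3"

lemma has_derivative_phi:
  assumes r: "cr q \<noteq> 0" and t: "ctau q \<noteq> 0" and h: "crho \<epsilon> q \<noteq> 0"
  shows "((\<lambda>q. cf q / crho \<epsilon> q) has_derivative
     (\<lambda>h. phi_dx \<epsilon> q * (xpart q \<bullet> xpart h) + phi_dt \<epsilon> q * (tpart q \<bullet> tpart h))) (at q)"
proof -
  have e: "(\<lambda>q. cf q / crho \<epsilon> q) = (\<lambda>q. ((cr q)\<^sup>2 - (ctau q)\<^sup>2) / 4 / crho \<epsilon> q)"
    by (simp add: cf_eq fun_eq_iff)
  show ?thesis unfolding e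
    apply (rule has_derivative_eq_rhs)
     apply (rule derivative_intros has_derivative_cr[OF r] has_derivative_ctau[OF t]
        has_derivative_crho[OF r t] | simp add: h)+
    apply (rule ext)
    using r t h
    apply (simp add: phi_dx_def phi_dt_def field_simps power2_eq_square)
    using crho_eq[of \<epsilon> q] by algebra
qed

text \<open>The inverse metric has no mixed t-x block, so only the x-part of \<open>d phi_dx\<close> and the
  t-part of \<open>d phi_dt\<close> enter the wave operator; the other parts are left unnamed.\<close>

lemma has_derivative_phi_dx:
  assumes r: "cr q \<noteq> 0" and t: "ctau q \<noteq> 0" and h: "crho \<epsilon> q \<noteq> 0"
  shows "(phi_dx \<epsilon> has_derivative (\<lambda>h. phi_dxdx \<epsilon> q * (xpart q \<bullet> xpart h)
     + (cr q * (crho \<epsilon> q)\<^sup>2 + cr q * crho \<epsilon> q * \<epsilon> * ((cr q)\<^sup>2 + (ctau q)\<^sup>2))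
         / (2 * (cr q)\<^sup>2 * (crho \<epsilon> q)^4) * (tpart q \<bullet> tpart h))) (at q)"
proof -
  have e: "phi_dx \<epsilon> = (\<lambda>q. ((cr q)\<^sup>2 + (ctau q)\<^sup>2) / (4 * cr q * (crho \<epsilon> q)\<^sup>2))"
    by (simp add: phi_dx_def fun_eq_iff)
  show ?thesis unfolding e
    apply (rule has_derivative_eq_rhs)
     apply (rule derivative_intros has_derivative_cr[OF r] has_derivative_ctau[OF t]
        has_derivative_crho[OF r t] | simp add: h r)+
    apply (rule ext)
    using r t h
    apply (simp add: phi_dxdx_def field_simps power2_eq_square power3_eq_cube)
    apply algebra
    done
qed

lemma has_derivative_phi_dt:
  assumes r: "cr q \<noteq> 0" and t: "ctau q \<noteq> 0" and h: "crho \<epsilon> q \<noteq> 0"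
  shows "(phi_dt \<epsilon> has_derivative (\<lambda>h. (- 1 / (2 * cr q * (crho \<epsilon> q)\<^sup>2) + (1 + \<epsilon> * cr q) / (crho \<epsilon> q)^3)
     * (xpart q \<bullet> xpart h) + phi_dtdt \<epsilon> q * (tpart q \<bullet> tpart h))) (at q)"
proof -
  have e: "phi_dt \<epsilon> = (\<lambda>q. - cr q / (2 * (crho \<epsilon> q)\<^sup>2))"
    by (simp add: phi_dt_def fun_eq_iff)
  show ?thesis unfolding e
    apply (rule has_derivative_eq_rhs)
     apply (rule derivative_intros has_derivative_cr[OF r] has_derivative_ctau[OF t]
        has_derivative_crho[OF r t] | simp add: h)+
    apply (rule ext)
    using r t h
    apply (simp add: phi_dtdt_def field_simps power2_eq_square power3_eq_cube)
    done
qed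

lemma pd_phi:
  assumes "q \<in> coord_domain \<epsilon>"
  shows "pd b (\<lambda>q. cf q / crho \<epsilon> q) q
    = (case b of Inl i \<Rightarrow> phi_dt \<epsilon> q * q $ Inl i | Inr j \<Rightarrow> phi_dx \<epsilon> q * q $ Inr j)"
  using assms by (intro pd_from_has_derivative has_derivative_phi) (auto simp: coord_domain_def)

lemma pd_pd_phi_t:
  assumes p: "p \<in> coord_domain \<epsilon>"
  shows "pd (Inl i') (pd (Inl i) (\<lambda>q. cf q / crho \<epsilon> q)) p
    = radial (phi_dt \<epsilon> p) (phi_dtdt \<epsilon> p) (\<lambda>i. p $ Inl i) i' i"
proof -
  have "pd (Inl i') (pd (Inl i) (\<lambda>q. cf q / crho \<epsilon> q)) p = pd (Inl i') (\<lambda>q. phi_dt \<epsilon> q * q $ Inl i) p"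
    unfolding pd_def[of "Inl i'"] using open_coord_domain p by (rule dd_cong_open) (simp add: pd_phi)
  also have "\<dots> = radial (phi_dt \<epsilon> p) (phi_dtdt \<epsilon> p) (\<lambda>i. p $ Inl i) i' i"
    unfolding pd_def using p
    by (subst dd_eq_derivative[OF has_derivative_mult[OF has_derivative_phi_dt has_derivative_nth]])
      (simp_all add: coord_domain_def radial_def inner_axis axis_nth_kdelta kdelta_commute mult.commute)
  finally show ?thesis .
qed

lemma pd_pd_phi_x:
  assumes p: "p \<in> coord_domain \<epsilon>"
  shows "pd (Inr l) (pd (Inr j) (\<lambda>q. cf q / crho \<epsilon> q)) p
    = radial (phi_dx \<epsilon> p) (phi_dxdx \<epsilon> p) (\<lambda>j. p $ Inr j) l j"
proof -
  have "pd (Inr l) (pd (Inr j) (\<lambda>q. cf q / crho \<epsilon> q)) p = pd (Inr l) (\<lambda>q. phi_dx \<epsilon> q * q $ Inr j) p"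
    unfolding pd_def[of "Inr l"] using open_coord_domain p by (rule dd_cong_open) (simp add: pd_phi)
  also have "\<dots> = radial (phi_dx \<epsilon> p) (phi_dxdx \<epsilon> p) (\<lambda>j. p $ Inr j) l j"
    unfolding pd_def using p
    by (subst dd_eq_derivative[OF has_derivative_mult[OF has_derivative_phi_dx has_derivative_nth]])
      (simp_all add: coord_domain_def radial_def inner_axis axis_nth_kdelta kdelta_commute mult.commute)
  finally show ?thesis .
qed

subsection \<open>The wave operator in terms of contractions\<close>

lemma contract_christoffel:
  fixes H :: "'i::finite \<Rightarrow> 'i \<Rightarrow> real"
  shows "(\<Sum>a\<in>UNIV. \<Sum>b\<in>UNIV. H a b * (X a b - (\<Sum>c\<in>UNIV. (1/2 * (\<Sum>d\<in>UNIV. H c d * T a b d)) * f c)))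
    = (\<Sum>a\<in>UNIV. \<Sum>b\<in>UNIV. H a b * X a b)
      - 1/2 * (\<Sum>d\<in>UNIV. (\<Sum>c\<in>UNIV. H c d * f c) * (\<Sum>a\<in>UNIV. \<Sum>b\<in>UNIV. H a b * T a b d))"
proof -
  have inner: "(\<Sum>c\<in>UNIV. (1/2 * (\<Sum>d\<in>UNIV. H c d * T a b d)) * f c)
      = 1/2 * (\<Sum>d\<in>UNIV. (\<Sum>c\<in>UNIV. H c d * f c) * T a b d)" for a b
  proof -
    have "(\<Sum>c\<in>UNIV. (1/2 * (\<Sum>d\<in>UNIV. H c d * T a b d)) * f c)
        = 1/2 * (\<Sum>c\<in>UNIV. \<Sum>d\<in>UNIV. H c d * f c * T a b d)"
      by (simp add: sum_distrib_left sum_distrib_right mult_ac)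
    also have "\<dots> = 1/2 * (\<Sum>d\<in>UNIV. \<Sum>c\<in>UNIV. H c d * f c * T a b d)"
      by (subst sum.swap) (rule refl)
    finally show ?thesis
      by (simp add: sum_distrib_right)
  qed
  have "(\<Sum>a\<in>UNIV. \<Sum>b\<in>UNIV. H a b * (1/2 * (\<Sum>d\<in>UNIV. (\<Sum>c\<in>UNIV. H c d * f c) * T a b d)))
      = 1/2 * (\<Sum>a\<in>UNIV. \<Sum>b\<in>UNIV. \<Sum>d\<in>UNIV. (\<Sum>c\<in>UNIV. H c d * f c) * (H a b * T a b d))"
    by (simp add: sum_distrib_left mult_ac)
  also have "\<dots> = 1/2 * (\<Sum>a\<in>UNIV. \<Sum>d\<in>UNIV. \<Sum>b\<in>UNIV. (\<Sum>c\<in>UNIV. H c d * f c) * (H a b * T a b d))"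
    by (subst (2) sum.swap) (rule refl)
  also have "\<dots> = 1/2 * (\<Sum>d\<in>UNIV. \<Sum>a\<in>UNIV. \<Sum>b\<in>UNIV. (\<Sum>c\<in>UNIV. H c d * f c) * (H a b * T a b d))"
    by (subst sum.swap) (rule refl)
  also have "\<dots> = 1/2 * (\<Sum>d\<in>UNIV. (\<Sum>c\<in>UNIV. H c d * f c) * (\<Sum>a\<in>UNIV. \<Sum>b\<in>UNIV. H a b * T a b d))"
    by (simp only: sum_distrib_left)
  finally show ?thesis
    by (simp only: inner right_diff_distrib sum_subtractf)
qed

lemma contract_christoffel_sym:
  fixes H :: "'i::finite \<Rightarrow> 'i \<Rightarrow> real"
  assumes sym: "\<And>a b. H a b = H b a"
  shows "(\<Sum>a\<in>UNIV. \<Sum>b\<in>UNIV. H a b * (D a d b + D b d a - D d a b))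
    = 2 * (\<Sum>a\<in>UNIV. \<Sum>b\<in>UNIV. H a b * D a d b) - (\<Sum>a\<in>UNIV. \<Sum>b\<in>UNIV. H a b * D d a b)"
proof -
  have "(\<Sum>a\<in>UNIV. \<Sum>b\<in>UNIV. H a b * D b d a) = (\<Sum>a\<in>UNIV. \<Sum>b\<in>UNIV. H a b * D a d b)"
    by (subst sum.swap) (simp add: sym)
  then show ?thesis
    by (simp add: algebra_simps sum.distrib sum_subtractf)
qed

lemma wave_expand:
  assumes sym: "\<And>a b. ginv G p $ a $ b = ginv G p $ b $ a"
  shows "wave G \<phi> p = (\<Sum>a\<in>UNIV. \<Sum>b\<in>UNIV. ginv G p $ a $ b * pd a (pd b \<phi>) p)
    - 1/2 * (\<Sum>d\<in>UNIV. (\<Sum>c\<in>UNIV. ginv G p $ c $ d * pd c \<phi> p)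
        * (2 * (\<Sum>a\<in>UNIV. \<Sum>b\<in>UNIV. ginv G p $ a $ b * pd a (\<lambda>q. G q $ d $ b) p)
           - (\<Sum>a\<in>UNIV. \<Sum>b\<in>UNIV. ginv G p $ a $ b * pd d (\<lambda>q. G q $ a $ b) p)))"
proof -
  have "(\<Sum>a\<in>UNIV. \<Sum>b\<in>UNIV. ginv G p $ a $ b
          * (pd a (\<lambda>q. G q $ d $ b) p + pd b (\<lambda>q. G q $ d $ a) p - pd d (\<lambda>q. G q $ a $ b) p))
      = 2 * (\<Sum>a\<in>UNIV. \<Sum>b\<in>UNIV. ginv G p $ a $ b * pd a (\<lambda>q. G q $ d $ b) p)
        - (\<Sum>a\<in>UNIV. \<Sum>b\<in>UNIV. ginv G p $ a $ b * pd d (\<lambda>q. G q $ a $ b) p)" for d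
    by (rule contract_christoffel_sym[OF sym])
  then show ?thesis
    unfolding wave_def christ_def by (simp only: contract_christoffel)
qed

subsection \<open>The wave operator of \<open>f / \<rho>\<close>\<close>

context
  fixes \<epsilon> :: real and p :: "real ^ ('m::finite + 'n::finite)"
  assumes p: "p \<in> coord_domain \<epsilon>"
begin

abbreviation \<alpha> where "\<alpha> \<equiv> inverse (warp \<epsilon> p)"
abbreviation \<beta> where "\<beta> \<equiv> (1 - \<alpha>) / (cr p)\<^sup>2"

lemma trace_hessian_phi:
  "(\<Sum>a\<in>UNIV. \<Sum>b\<in>UNIV. warped \<alpha> p a b * pd a (pd b (\<lambda>q. cf q / crho \<epsilon> q)) p)
   = - (real CARD('m) * phi_dt \<epsilon> p + phi_dtdt \<epsilon> p * (ctau p)\<^sup>2)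
     + real CARD('n) * \<alpha> * phi_dx \<epsilon> p + (\<alpha> * phi_dxdx \<epsilon> p + \<beta> * phi_dx \<epsilon> p) * (cr p)\<^sup>2
     + \<beta> * phi_dxdx \<epsilon> p * ((cr p)\<^sup>2)\<^sup>2"
  by (simp add: sum_UNIV_Plus warped_def pd_pd_phi_t[OF p] pd_pd_phi_x[OF p] sum_negf
      sum_radial_diag radial_frobenius sumsq_xcoord sumsq_tcoord)

lemma cr_nonzero: "cr p \<noteq> 0"
  using p by (simp add: coord_domain_def)

lemma raise_dphi:
  "(\<Sum>c\<in>UNIV. warped \<alpha> p c d * pd c (\<lambda>q. cf q / crho \<epsilon> q) p)
   = (case d of Inl i \<Rightarrow> - phi_dt \<epsilon> p * p $ Inl i | Inr l \<Rightarrow> phi_dx \<epsilon> p * p $ Inr l)"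
proof (cases d)
  case (Inr l)
  have "(\<Sum>j\<in>UNIV. p $ Inr j * (phi_dx \<epsilon> p * p $ Inr j)) = phi_dx \<epsilon> p * (cr p)\<^sup>2"
    by (simp add: sumsq_xcoord[unfolded sumsq_def, symmetric] sum_distrib_left mult_ac)
  then have "(\<Sum>j\<in>UNIV. radial \<alpha> \<beta> (\<lambda>j. p $ Inr j) j l * (phi_dx \<epsilon> p * p $ Inr j))
      = phi_dx \<epsilon> p * p $ Inr l"
    using cr_nonzero by (simp only: sum_radial_mult_left) (simp add: field_simps)
  with Inr show ?thesis
    by (simp add: sum_UNIV_Plus warped_def pd_phi[OF p])
qed (simp add: sum_UNIV_Plus warped_def pd_phi[OF p] sum_negf)

text \<open>Yx, Zt and Zx are the coefficients of the contractions \<open>g\<^sup>a\<^sup>b \<partial>\<^sub>a g\<^sub>d\<^sub>b\<close> and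
  \<open>g\<^sup>a\<^sup>b \<partial>\<^sub>d g\<^sub>a\<^sub>b\<close> computed below.\<close>

abbreviation Yx where
  "Yx \<equiv> (\<alpha> + \<beta> * (cr p)\<^sup>2) * (warp_dx \<epsilon> p + (- warp_dx \<epsilon> p / (cr p)\<^sup>2 - 2 * (1 - warp \<epsilon> p) / (cr p)^4) * (cr p)\<^sup>2)
       + (1 - warp \<epsilon> p) / (cr p)\<^sup>2 * (\<alpha> + \<beta> * (cr p)\<^sup>2)
       + (1 - warp \<epsilon> p) / (cr p)\<^sup>2 * (real CARD('n) * \<alpha> + \<beta> * (cr p)\<^sup>2)"

abbreviation Zt where
  "Zt \<equiv> real CARD('n) * \<alpha> * warp_dt \<epsilon> p + (\<alpha> * (- warp_dt \<epsilon> p / (cr p)\<^sup>2) + \<beta> * warp_dt \<epsilon> p) * (cr p)\<^sup>2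
           + \<beta> * (- warp_dt \<epsilon> p / (cr p)\<^sup>2) * ((cr p)\<^sup>2)\<^sup>2"

abbreviation Zx where
  "Zx \<equiv> real CARD('n) * \<alpha> * warp_dx \<epsilon> p
           + (\<alpha> * (- warp_dx \<epsilon> p / (cr p)\<^sup>2 - 2 * (1 - warp \<epsilon> p) / (cr p)^4) + \<beta> * warp_dx \<epsilon> p) * (cr p)\<^sup>2
           + \<beta> * (- warp_dx \<epsilon> p / (cr p)\<^sup>2 - 2 * (1 - warp \<epsilon> p) / (cr p)^4) * ((cr p)\<^sup>2)\<^sup>2
           + 2 * ((1 - warp \<epsilon> p) / (cr p)\<^sup>2) * (\<alpha> + \<beta> * (cr p)\<^sup>2)"

lemma contract_dgmat_first:
  "(\<Sum>a\<in>UNIV. \<Sum>b\<in>UNIV. warped \<alpha> p a b * pd a (\<lambda>q. gmat \<epsilon> q $ d $ b) p)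
   = (case d of Inl i \<Rightarrow> 0 | Inr l \<Rightarrow> Yx * p $ Inr l)"
  by (cases d) (simp_all add: sum_UNIV_Plus warped_def pd_gmat[OF p] warped_deriv_def
      radial_contract_grad_first sumsq_xcoord)

lemma contract_dgmat_last:
  "(\<Sum>a\<in>UNIV. \<Sum>b\<in>UNIV. warped \<alpha> p a b * pd d (\<lambda>q. gmat \<epsilon> q $ a $ b) p)
   = (case d of Inl i \<Rightarrow> Zt * p $ Inl i | Inr s \<Rightarrow> Zx * p $ Inr s)"
proof (cases d)
  case (Inl i)
  have "(\<Sum>j\<in>UNIV. \<Sum>l\<in>UNIV. radial \<alpha> \<beta> (\<lambda>j. p $ Inr j) j l
          * (p $ Inl i * radial (warp_dt \<epsilon> p) (- warp_dt \<epsilon> p / (cr p)\<^sup>2) (\<lambda>j. p $ Inr j) j l))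
      = (\<Sum>j\<in>UNIV. \<Sum>l\<in>UNIV. radial \<alpha> \<beta> (\<lambda>j. p $ Inr j) j l
          * radial (warp_dt \<epsilon> p) (- warp_dt \<epsilon> p / (cr p)\<^sup>2) (\<lambda>j. p $ Inr j) j l) * p $ Inl i"
    by (simp only: sum_distrib_right) (simp only: mult_ac)
  with Inl show ?thesis
    by (simp add: sum_UNIV_Plus warped_def pd_gmat[OF p] warped_deriv_def radial_frobenius sumsq_xcoord)
qed (simp add: sum_UNIV_Plus warped_def pd_gmat[OF p] warped_deriv_def radial_contract_grad_last sumsq_xcoord)

lemma christoffel_phi:
  "(\<Sum>d\<in>UNIV. (\<Sum>c\<in>UNIV. warped \<alpha> p c d * pd c (\<lambda>q. cf q / crho \<epsilon> q) p)
      * (2 * (\<Sum>a\<in>UNIV. \<Sum>b\<in>UNIV. warped \<alpha> p a b * pd a (\<lambda>q. gmat \<epsilon> q $ d $ b) p)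
         - (\<Sum>a\<in>UNIV. \<Sum>b\<in>UNIV. warped \<alpha> p a b * pd d (\<lambda>q. gmat \<epsilon> q $ a $ b) p)))
   = phi_dt \<epsilon> p * Zt * (ctau p)\<^sup>2 + phi_dx \<epsilon> p * (2 * Yx - Zx) * (cr p)\<^sup>2"
proof -
  have "(\<Sum>i\<in>UNIV. (- phi_dt \<epsilon> p * p $ Inl i) * (2 * 0 - z * p $ Inl i)) = phi_dt \<epsilon> p * z * (ctau p)\<^sup>2"
    for z
    by (simp add: sumsq_tcoord[unfolded sumsq_def, symmetric] sum_distrib_left mult_ac)
  moreover have "(\<Sum>l\<in>UNIV. (phi_dx \<epsilon> p * p $ Inr l) * (2 * (y * p $ Inr l) - z * p $ Inr l))
      = phi_dx \<epsilon> p * (2 * y - z) * (cr p)\<^sup>2" for y z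
    unfolding sumsq_xcoord[unfolded sumsq_def, symmetric] sum_distrib_left
    by (rule sum.cong) (simp_all add: algebra_simps)
  ultimately show ?thesis
    by (simp only: raise_dphi contract_dgmat_first contract_dgmat_last)
      (simp only: sum_UNIV_Plus sum.case)
qed

lemma wave_phi:
  "wave (gmat \<epsilon>) (\<lambda>q. cf q / crho \<epsilon> q) p =
    - (real CARD('n) - 3) * cf p / (crho \<epsilon> p) ^ 3
    + (real CARD('n) + real CARD('m) - 2) * cr p / (2 * (crho \<epsilon> p)\<^sup>2)"
proof -
  have h: "crho \<epsilon> p \<noteq> 0"
    using p by (simp add: coord_domain_def)
  have H: "ginv (gmat \<epsilon>) p $ a $ b = warped \<alpha> p a b" for a b
    using p by (simp add: coord_domain_def ginv_gmat)
  then have sym: "ginv (gmat \<epsilon>) p $ a $ b = ginv (gmat \<epsilon>) p $ b $ a" for a b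
    by (simp add: warped_commute[of _ _ a])
  have "wave (gmat \<epsilon>) (\<lambda>q. cf q / crho \<epsilon> q) p
      = - (real CARD('m) * phi_dt \<epsilon> p + phi_dtdt \<epsilon> p * (ctau p)\<^sup>2)
        + real CARD('n) * \<alpha> * phi_dx \<epsilon> p + (\<alpha> * phi_dxdx \<epsilon> p + \<beta> * phi_dx \<epsilon> p) * (cr p)\<^sup>2
        + \<beta> * phi_dxdx \<epsilon> p * ((cr p)\<^sup>2)\<^sup>2
        - 1/2 * (phi_dt \<epsilon> p * Zt * (ctau p)\<^sup>2 + phi_dx \<epsilon> p * (2 * Yx - Zx) * (cr p)\<^sup>2)"
    by (simp only: wave_expand[OF sym] H trace_hessian_phi christoffel_phi)
  also have "\<dots> = - (real CARD('n) - 3) * cf p / (crho \<epsilon> p) ^ 3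
    + (real CARD('n) + real CARD('m) - 2) * cr p / (2 * (crho \<epsilon> p)\<^sup>2)"
    unfolding cf_eq phi_dt_def phi_dtdt_def phi_dx_def phi_dxdx_def warp_def warp_dx_def warp_dt_def
    using cr_nonzero h
    apply (simp add: field_simps power2_eq_square power3_eq_cube power4_eq_xxxx)
    using crho_eq[of \<epsilon> p] by algebra
  finally show ?thesis .
qed

end

theorem proposition3p4:
  fixes \<epsilon> :: real and p :: "real ^ ('m::finite + 'n::finite)"
  assumes "cr p \<noteq> 0" and "ctau p \<noteq> 0" and "crho \<epsilon> p \<noteq> 0"
  shows "wave (gmat \<epsilon>) (\<lambda>q. cf q / crho \<epsilon> q) p =
    - (real CARD('n) - 3) * cf p / (crho \<epsilon> p) ^ 3
    + (real CARD('n) + real CARD('m) - 2) * cr p / (2 * (crho \<epsilon> p)\<^sup>2)"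
proof (rule wave_phi)
  show "p \<in> coord_domain \<epsilon>"
    using assms by (simp add: coord_domain_def)
qed

end
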